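(* Let $N_r,N_t,L$ be positive integers with $L\le\min\{N_r,N_t\}$, and let $\mathbf{H}\in\mathbb{C}^{N_r\times N_t}$, $\mathbf{H}\neq\mathbf{0}$, be a channel matrix of the form $\mathbf{H} = \sqrt{\tfrac{N_r N_t}{L}}\sum_{l=1}^{L} h_l\, \mathbf{a}_r(\theta_{r,l})\, \mathbf{a}_t(\theta_{t,l})^H$, with $\mathbf{H}=\mathbf{U}\boldsymbol{\Sigma}\mathbf{V}^H$ where $\mathbf{U}\in\mathbb{C}^{N_r\times L}$ and $\mathbf{V}\in\mathbb{C}^{N_t\times L}$ consist of the $L$ dominant left and right singular vectors of $\mathbf{H}$ and $\boldsymbol{\Sigma}\in\mathbb{R}^{L\times L}$ is diagonal with the $L$ largest singular values. Let $\widehat{\mathbf{U}}\in\mathbb{C}^{N_r\times L}$ and $\widehat{\mathbf{V}}\in\mathbb{C}^{N_t\times L}$ be the estimated column and row subspace matrices (each with orthonormal columns) produced by the two-stage procedure: $\widehat{\mathbf{U}}$ is the matrix of $L$ dominant left singular vectors of a noisy observation $\mathbf{Y}_S$ of the first $m$ columns of $\mathbf{H}$, and $\widehat{\mathbf{V}}$ is the matrix of $L$ dominant right singular vectors of the observation matrix $\widehat{\mathbf{Q}}$ of $\mathbf{H}$ taken through the combiner. Suppose the combiner and precoder equal these matrices exactly: $\widehat{\mathbf{W}}=\widehat{\mathbf{U}}$ and $\widehat{\mathbf{F}}=\widehat{\mathbf{V}}$. Then $$\eta(\widehat{\mathbf{W}},\widehat{\mathbf{F}}) := \frac{\|\widehat{\mathbf{W}}^H\mathbf{H}\widehat{\mathbf{F}}\|_F^2}{\operatorname{tr}(\mathbf{H}^H\mathbf{H})}\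 \ge\ \sigma_L^2(\widehat{\mathbf{U}}^H\mathbf{U})\,\sigma_L^2(\widehat{\mathbf{V}}^H\mathbf{V}).$$
   Context: $\mathbf{a}_r(\theta) = \frac{1}{\sqrt{N_r}}[1, e^{-j\pi\sin\theta}, \dots, e^{-j\pi (N_r-1)\sin\theta}]^T$, $\mathbf{a}_t(\theta) = \frac{1}{\sqrt{N_t}}[1, e^{-j\pi\sin\theta}, \dots, e^{-j\pi (N_t-1)\sin\theta}]^T$, $h_l\in\mathbb{C}$, $\theta_{r,l},\theta_{t,l}\in[-\pi/2,\pi/2)$; such $\mathbf{H}$ has rank at most $L$. $\sigma_L(\mathbf{X})$ denotes the $L$-th largest singular value of $\mathbf{X}$. *)

theory Defs
  imports "Jordan_Normal_Form.Schur_Decomposition" "Jordan_Normal_Form.Char_Poly"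
begin

text \<open>Normalised ULA steering vector a(theta) of length N (entries indexed 0..N-1).\<close>
definition steer :: "nat \<Rightarrow> real \<Rightarrow> complex vec" where
  "steer N \<theta> = vec N (\<lambda>k. exp (- \<i> * of_real (pi * real k * sin \<theta>)) / of_real (sqrt (real N)))"

definition channel :: "nat \<Rightarrow> nat \<Rightarrow> nat \<Rightarrow> (nat \<Rightarrow> complex) \<Rightarrow> (nat \<Rightarrow> real) \<Rightarrow> (nat \<Rightarrow> real) \<Rightarrow> complex mat" where
  "channel Nr Nt L h \<theta>r \<theta>t = mat Nr Nt (\<lambda>(i,k).
     of_real (sqrt (real Nr * real Nt / real L)) *
     (\<Sum>l<L. h l * (steer Nr (\<theta>r l) $ i) * cnj (steer Nt (\<theta>t l) $ k)))"

text \<open>Singular values of A (descending, with multiplicity, length = number of columns of A):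
  the nonnegative square roots of the eigenvalues of A^H A (roots of its characteristic polynomial).\<close>
definition sing_vals :: "complex mat \<Rightarrow> real list" where
  "sing_vals A = (THE s. length s = dim_col A \<and> sorted_wrt (\<ge>) s \<and> (\<forall>x\<in>set s. x \<ge> 0) \<and>
      char_poly (mat_adjoint A * A) = (\<Prod>x\<leftarrow>s. [:- complex_of_real (x\<^sup>2), 1:]))"

text \<open>sigma_k(A): the k-th largest singular value (k >= 1).\<close>
definition sigma :: "nat \<Rightarrow> complex mat \<Rightarrow> real" where
  "sigma k A = sing_vals A ! (k - 1)"

definition unitary :: "nat \<Rightarrow> complex mat \<Rightarrow> bool" where
  "unitary n P \<longleftrightarrow> P \<in> carrier_mat n n \<and> mat_adjoint P * P = 1\<^sub>m n"

definition sv_diag :: "complex mat \<Rightarrow> complex mat" where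
  "sv_diag A = mat (dim_row A) (dim_col A)
     (\<lambda>(i,j). if i = j then complex_of_real (sing_vals A ! i) else 0)"

definition first_cols :: "nat \<Rightarrow> complex mat \<Rightarrow> complex mat" where
  "first_cols L P = mat (dim_row P) L (\<lambda>(i,j). P $$ (i,j))"

definition dominant_left_sv :: "nat \<Rightarrow> complex mat \<Rightarrow> complex mat \<Rightarrow> bool" where
  "dominant_left_sv L Y Uh \<longleftrightarrow> (\<exists>P Q. unitary (dim_row Y) P \<and> unitary (dim_col Y) Q \<and>
      Y = P * sv_diag Y * mat_adjoint Q \<and> Uh = first_cols L P)"

definition dominant_right_sv :: "nat \<Rightarrow> complex mat \<Rightarrow> complex mat \<Rightarrow> bool" where
  "dominant_right_sv L Y Vh \<longleftrightarrow> (\<exists>P Q. unitary (dim_row Y) P \<and> unitary (dim_col Y) Q \<and>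
      Y = P * sv_diag Y * mat_adjoint Q \<and> Vh = first_cols L Q)"

definition mtrace :: "complex mat \<Rightarrow> complex" where
  "mtrace A = (\<Sum>i<dim_row A. A $$ (i,i))"

definition fro_sq :: "complex mat \<Rightarrow> real" where
  "fro_sq A = (\<Sum>i<dim_row A. \<Sum>j<dim_col A. (cmod (A $$ (i,j)))\<^sup>2)"

text \<open>eta(W,F) = ||W^H H F||_F^2 / tr(H^H H)  (the trace is real; we take its real part).\<close>
definition eta :: "complex mat \<Rightarrow> complex mat \<Rightarrow> complex mat \<Rightarrow> real" where
  "eta H W F = fro_sq (mat_adjoint W * H * F) / Re (mtrace (mat_adjoint H * H))"

end

theory Submission
  imports Defs
begin

text \<open>
  Put \<open>A = Uh\<^sup>H U\<close> and \<open>B = Vh\<^sup>H V\<close>. The compact SVD \<open>H = U D V\<^sup>H\<close> turns the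
  compressed channel into \<open>Uh\<^sup>H H Vh = A D B\<^sup>H\<close>. Since \<open>A\<close> has \<open>L\<close> columns,
  \<open>\<sigma>\<^sub>L(A)\<^sup>2\<close> is the least eigenvalue of the Hermitian matrix \<open>A\<^sup>H A\<close> and hence a lower bound
  of its Rayleigh quotient, so \<open>\<parallel>A Z\<parallel>\<^sub>F\<^sup>2 \<ge> \<sigma>\<^sub>L(A)\<^sup>2 \<parallel>Z\<parallel>\<^sub>F\<^sup>2\<close>. Applied to \<open>A\<close> and, after
  taking adjoints, to \<open>B\<close>, this gives
  \<open>\<parallel>A D B\<^sup>H\<parallel>\<^sub>F\<^sup>2 \<ge> \<sigma>\<^sub>L(A)\<^sup>2 \<sigma>\<^sub>L(B)\<^sup>2 \<parallel>D\<parallel>\<^sub>F\<^sup>2\<close>, and \<open>\<parallel>D\<parallel>\<^sub>F\<^sup>2 = \<parallel>H\<parallel>\<^sub>F\<^sup>2 = tr(H\<^sup>H H)\<close>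
  because \<open>U\<close> and \<open>V\<close> have orthonormal columns; this is positive as \<open>H \<noteq> 0\<close>. Neither the array-response form of \<open>H\<close>
  nor the estimation procedure behind \<open>Uh\<close> and \<open>Vh\<close> matters beyond the shapes of these
  matrices.
\<close>

section \<open>Inner products and adjoints\<close>

definition vec_norm_sq :: "complex vec \<Rightarrow> real" where
  "vec_norm_sq x = (\<Sum>i<dim_vec x. (cmod (x $ i))\<^sup>2)"

definition vec_normalize :: "complex vec \<Rightarrow> complex vec" where
  "vec_normalize v = complex_of_real (1 / sqrt (vec_norm_sq v)) \<cdot>\<^sub>v v"

lemma cscalar_prod_eq_sum:
  "dim_vec y = dim_vec x \<Longrightarrow> x \<bullet>c y = (\<Sum>i<dim_vec x. x $ i * cnj (y $ i))"
  unfolding scalar_prod_def conjugate_vec_def by (auto simp: atLeast0LessThan intro!: sum.cong)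

lemma cscalar_prod_self: "x \<bullet>c x = complex_of_real (vec_norm_sq x)"
  by (simp only: cscalar_prod_eq_sum[OF refl] vec_norm_sq_def of_real_sum complex_norm_square)

lemma cscalar_prod_swap: "dim_vec y = dim_vec x \<Longrightarrow> x \<bullet>c y = cnj (y \<bullet>c x)"
  by (simp add: cscalar_prod_eq_sum cnj_sum mult.commute)

lemma cscalar_prod_add_right:
  "x \<in> carrier_vec n \<Longrightarrow> y \<in> carrier_vec n \<Longrightarrow> z \<in> carrier_vec n \<Longrightarrow> x \<bullet>c (y + z) = x \<bullet>c y + x \<bullet>c z"
  by (simp add: conjugate_add_vec scalar_prod_add_distrib[OF _ carrier_vec_conjugate carrier_vec_conjugate])

lemma cscalar_prod_add_left:
  "x \<in> carrier_vec n \<Longrightarrow> y \<in> carrier_vec n \<Longrightarrow> z \<in> carrier_vec n \<Longrightarrow> (y + z) \<bullet>c x = y \<bullet>c x + z \<bullet>c x"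
  by (simp add: add_scalar_prod_distrib[OF _ _ carrier_vec_conjugate])

lemma cscalar_prod_smult_right:
  "x \<in> carrier_vec n \<Longrightarrow> y \<in> carrier_vec n \<Longrightarrow> x \<bullet>c (a \<cdot>\<^sub>v y) = cnj a * (x \<bullet>c y)"
  by (simp add: cscalar_prod_eq_sum sum_distrib_left algebra_simps)

lemma cscalar_prod_smult_left:
  "x \<in> carrier_vec n \<Longrightarrow> y \<in> carrier_vec n \<Longrightarrow> (a \<cdot>\<^sub>v y) \<bullet>c x = a * (y \<bullet>c x)"
  by (simp add: cscalar_prod_eq_sum sum_distrib_left algebra_simps)

lemma vec_norm_sq_nonneg: "0 \<le> vec_norm_sq x"
  unfolding vec_norm_sq_def by (auto intro: sum_nonneg)

lemma vec_norm_sq_pos: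
  assumes "x \<in> carrier_vec n" "x \<noteq> 0\<^sub>v n"
  shows "0 < vec_norm_sq x"
proof -
  obtain i where i: "i < n" "x $ i \<noteq> 0"
    using assms by (metis carrier_vecD eq_vecI index_zero_vec)
  have "(cmod (x $ i))\<^sup>2 \<le> vec_norm_sq x"
    unfolding vec_norm_sq_def using i assms(1) by (intro member_le_sum) auto
  moreover have "0 < (cmod (x $ i))\<^sup>2" using i by simp
  ultimately show ?thesis by linarith
qed

lemma vec_normalize_carrier [simp]: "v \<in> carrier_vec n \<Longrightarrow> vec_normalize v \<in> carrier_vec n"
  by (simp add: vec_normalize_def)

lemma vec_normalize_unit:
  assumes "v \<in> carrier_vec n" "v \<noteq> 0\<^sub>v n"
  shows "vec_normalize v \<bullet>c vec_normalize v = 1"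
proof -
  define r where "r = 1 / sqrt (vec_norm_sq v)"
  have "vec_normalize v \<bullet>c vec_normalize v = of_real r * cnj (of_real r) * (v \<bullet>c v)"
    using assms(1) by (simp add: vec_normalize_def r_def cscalar_prod_smult_left[of _ n]
        cscalar_prod_smult_right[of _ n])
  also have "\<dots> = of_real (r * r * vec_norm_sq v)"
    by (simp add: cscalar_prod_self)
  also have "r * r * vec_norm_sq v = 1"
    using vec_norm_sq_pos[OF assms] by (simp add: r_def)
  finally show ?thesis by simp
qed

lemma vec_normalize_unit_id: "v \<bullet>c v = 1 \<Longrightarrow> vec_normalize v = v"
  by (simp add: vec_normalize_def cscalar_prod_self)

lemma mat_adjoint_dim [simp]:
  "dim_row (mat_adjoint A) = dim_col A" "dim_col (mat_adjoint A) = dim_row A"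
  unfolding mat_adjoint_def by (auto simp: mat_of_rows_def)

lemma mat_adjoint_carrier [simp]: "A \<in> carrier_mat n m \<Longrightarrow> mat_adjoint A \<in> carrier_mat m n"
  by (metis mat_adjoint_dim carrier_matD carrier_matI)

lemma mat_adjoint_mult_vec_carrier [simp]:
  "A \<in> carrier_mat n m \<Longrightarrow> x \<in> carrier_vec n \<Longrightarrow> mat_adjoint A *\<^sub>v x \<in> carrier_vec m"
  by (metis mat_adjoint_carrier mult_mat_vec_carrier)

lemma mat_adjoint_index [simp]:
  "i < dim_col A \<Longrightarrow> j < dim_row A \<Longrightarrow> mat_adjoint A $$ (i, j) = cnj (A $$ (j, i))"
  unfolding mat_adjoint_def by (auto simp: mat_of_rows_def conjugate_vec_def)

lemma mat_adjoint_adjoint [simp]: "mat_adjoint (mat_adjoint (A :: complex mat)) = A"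
  by (rule eq_matI) auto

lemma mat_adjoint_mult:
  "A \<in> carrier_mat n k \<Longrightarrow> B \<in> carrier_mat k m \<Longrightarrow>
    mat_adjoint (A * B) = mat_adjoint B * mat_adjoint (A :: complex mat)"
  by (intro eq_matI) (auto simp: scalar_prod_def cnj_sum mult.commute intro!: sum.cong)

lemma assoc_mult_mat3_vec:
  "A \<in> carrier_mat n k \<Longrightarrow> M \<in> carrier_mat k l \<Longrightarrow> B \<in> carrier_mat l m \<Longrightarrow> y \<in> carrier_vec m \<Longrightarrow>
    A * M * B *\<^sub>v y = A *\<^sub>v (M *\<^sub>v (B *\<^sub>v y))"
  using assoc_mult_mat_vec[of "A * M" n l B m y] assoc_mult_mat_vec[of A n k M l "B *\<^sub>v y"] by simp

lemma cscalar_prod_mat_adjoint: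
  fixes A :: "complex mat"
  assumes A: "A \<in> carrier_mat n m" and z: "z \<in> carrier_vec n" and y: "y \<in> carrier_vec m"
  shows "(mat_adjoint A *\<^sub>v z) \<bullet>c y = z \<bullet>c (A *\<^sub>v y)"
proof -
  have "(mat_adjoint A *\<^sub>v z) \<bullet>c y = (\<Sum>i<m. (\<Sum>j<n. cnj (A $$ (j, i)) * z $ j) * cnj (y $ i))"
    using assms by (subst cscalar_prod_eq_sum) (auto simp: scalar_prod_def atLeast0LessThan intro!: sum.cong)
  also have "\<dots> = (\<Sum>i<m. \<Sum>j<n. z $ j * cnj (A $$ (j, i) * y $ i))"
    by (simp add: sum_distrib_left mult_ac)
  also have "\<dots> = (\<Sum>j<n. \<Sum>i<m. z $ j * cnj (A $$ (j, i) * y $ i))"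
    by (rule sum.swap)
  also have "\<dots> = z \<bullet>c (A *\<^sub>v y)"
    using assms by (subst cscalar_prod_eq_sum)
      (auto simp: scalar_prod_def atLeast0LessThan cnj_sum sum_distrib_left intro!: sum.cong)
  finally show ?thesis .
qed

definition hermitian :: "complex mat \<Rightarrow> bool" where
  "hermitian M \<longleftrightarrow> mat_adjoint M = M"

lemma hermitian_cscalar_prod:
  "M \<in> carrier_mat n n \<Longrightarrow> hermitian M \<Longrightarrow> x \<in> carrier_vec n \<Longrightarrow> y \<in> carrier_vec n \<Longrightarrow>
    (M *\<^sub>v x) \<bullet>c y = x \<bullet>c (M *\<^sub>v y)"
  using cscalar_prod_mat_adjoint[of M n n x y] by (simp add: hermitian_def)

lemma hermitian_adjoint_congruence:
  assumes M: "M \<in> carrier_mat n n" and herm: "hermitian M" and B: "B \<in> carrier_mat n m"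
  shows "hermitian (mat_adjoint B * M * B)"
proof -
  have "mat_adjoint (mat_adjoint B * M * B) = mat_adjoint B * mat_adjoint (mat_adjoint B * M)"
    using M B by (intro mat_adjoint_mult) auto
  also have "mat_adjoint (mat_adjoint B * M) = mat_adjoint M * B"
    using M B mat_adjoint_mult[of "mat_adjoint B" m n M n] by simp
  finally show ?thesis
    using M B herm by (simp add: hermitian_def assoc_mult_mat[of _ m n _ n _ m])
qed

lemma hermitian_adjoint_mult_self: "A \<in> carrier_mat k n \<Longrightarrow> hermitian (mat_adjoint A * A)"
  using mat_adjoint_mult[of "mat_adjoint A" n k A n] by (simp add: hermitian_def)

section \<open>Rayleigh quotients of Hermitian matrices\<close>

lemma unitary_normalized_orthogonal_cols:
  assumes len: "length ws = n" and carrier: "set ws \<subseteq> carrier_vec n" and orth: "corthogonal ws"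
  shows "unitary n (mat_of_cols n (map vec_normalize ws))"
proof -
  define W where "W = mat_of_cols n (map vec_normalize ws)"
  have ws: "ws ! i \<in> carrier_vec n" "ws ! i \<noteq> 0\<^sub>v n" if "i < n" for i
  proof -
    show wsi: "ws ! i \<in> carrier_vec n" using carrier len that by auto
    have "ws ! i \<bullet>c ws ! i \<noteq> 0" using orth len that by (auto simp: corthogonal_def)
    then show "ws ! i \<noteq> 0\<^sub>v n" using wsi by auto
  qed
  have W: "W \<in> carrier_mat n n"
    using mat_of_cols_carrier(1)[of n "map vec_normalize ws"] by (simp add: W_def len)
  have colW: "col W j = vec_normalize (ws ! j)" if "j < n" for j
    using that ws len by (simp add: W_def col_mat_of_cols)
  have "mat_adjoint W * W = 1\<^sub>m n"
  proof (rule eq_matI)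
    fix i j assume "i < dim_row (1\<^sub>m n :: complex mat)" "j < dim_col (1\<^sub>m n :: complex mat)"
    then have i: "i < n" and j: "j < n" by auto
    have "(mat_adjoint W * W) $$ (i, j) = col W j \<bullet>c col W i"
      using W i j by (subst cscalar_prod_eq_sum)
        (auto simp: scalar_prod_def atLeast0LessThan mult.commute intro!: sum.cong)
    also have "\<dots> = 1\<^sub>m n $$ (i, j)"
    proof (cases "i = j")
      case True
      then show ?thesis using colW[OF j] vec_normalize_unit[OF ws[OF j]] i by simp
    next
      case False
      have "ws ! j \<bullet>c ws ! i = 0" using orth len i j False by (auto simp: corthogonal_def)
      then show ?thesis using False i j ws[OF i] ws[OF j]
        by (simp add: colW vec_normalize_def cscalar_prod_smult_left[of _ n] cscalar_prod_smult_right[of _ n])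
    qed
    finally show "(mat_adjoint W * W) $$ (i, j) = 1\<^sub>m n $$ (i, j)" .
  qed (use W in auto)
  then show ?thesis using W by (simp add: unitary_def W_def)
qed

lemma unit_vec_extends_to_unitary:
  assumes u: "u \<in> carrier_vec n" and uu: "u \<bullet>c u = 1"
  obtains W where "unitary n W" "col W 0 = u"
proof -
  have u0: "u \<noteq> 0\<^sub>v n" using uu u by auto
  then have n0: "0 < n" using u by (cases n) auto
  interpret cof_vec_space n "TYPE(complex)" .
  define b where "b = basis_completion u"
  note bc = basis_completion[OF u u0, folded b_def]
  define ws where "ws = gram_schmidt n b"
  note gs = gram_schmidt_result[OF bc(2) bc(4) bc(5) ws_def]
  have len: "length ws = n" using gs bc by simp
  obtain b' where "b = u # b'" using bc(6,7) n0 by (cases b) auto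
  then have "hd ws = u" using u by (simp add: ws_def)
  then have "ws ! 0 = u" using len n0 by (cases ws) auto
  then have "col (mat_of_cols n (map vec_normalize ws)) 0 = u"
    using n0 len gs(3) u by (simp add: col_mat_of_cols vec_normalize_unit_id[OF uu])
  then show thesis using that unitary_normalized_orthogonal_cols[OF len gs(3,2)] by blast
qed

lemma unitary_first_col_complement:
  fixes W :: "complex mat"
  assumes W: "unitary (Suc m) W"
  defines "B \<equiv> mat (Suc m) m (\<lambda>(i, j). W $$ (i, Suc j))"
  shows "B \<in> carrier_mat (Suc m) m" and "mat_adjoint B * B = 1\<^sub>m m"
    and "mat_adjoint B *\<^sub>v col W 0 = 0\<^sub>v m"
    and "z \<in> carrier_vec (Suc m) \<Longrightarrow> z = (z \<bullet>c col W 0) \<cdot>\<^sub>v col W 0 + B *\<^sub>v (mat_adjoint B *\<^sub>v z)"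
proof -
  have Wc: "W \<in> carrier_mat (Suc m) (Suc m)" and WW: "mat_adjoint W * W = 1\<^sub>m (Suc m)"
    using W by (auto simp: unitary_def)
  have orth: "(\<Sum>k<Suc m. cnj (W $$ (k, i)) * W $$ (k, j)) = (if i = j then 1 else 0)"
    if "i < Suc m" "j < Suc m" for i j
    using arg_cong[OF WW, of "\<lambda>A. A $$ (i, j)"] Wc that
    by (auto simp: scalar_prod_def atLeast0LessThan)
  show B: "B \<in> carrier_mat (Suc m) m" by (simp add: B_def)
  show "mat_adjoint B * B = 1\<^sub>m m"
    using B orth by (intro eq_matI) (auto simp: B_def scalar_prod_def atLeast0LessThan)
  show "mat_adjoint B *\<^sub>v col W 0 = 0\<^sub>v m"
    using B Wc orth[of "Suc _" 0] by (intro eq_vecI) (auto simp: B_def scalar_prod_def atLeast0LessThan)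
  assume z: "z \<in> carrier_vec (Suc m)"
  have WW': "W * mat_adjoint W = 1\<^sub>m (Suc m)"
    by (rule mat_mult_left_right_inverse[OF mat_adjoint_carrier[OF Wc] Wc WW])
  have "z = (W * mat_adjoint W) *\<^sub>v z" using WW' z by simp
  also have "\<dots> = W *\<^sub>v (mat_adjoint W *\<^sub>v z)"
    by (rule assoc_mult_mat_vec[OF Wc mat_adjoint_carrier[OF Wc] z])
  also have "\<dots> = (z \<bullet>c col W 0) \<cdot>\<^sub>v col W 0 + B *\<^sub>v (mat_adjoint B *\<^sub>v z)"
    using Wc z by (intro eq_vecI)
      (auto simp: B_def scalar_prod_def atLeast0LessThan sum.lessThan_Suc_shift mult_ac
        simp del: sum.lessThan_Suc)
  finally show "z = (z \<bullet>c col W 0) \<cdot>\<^sub>v col W 0 + B *\<^sub>v (mat_adjoint B *\<^sub>v z)" .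
qed

lemma unit_vec_orthonormal_complement:
  fixes u :: "complex vec"
  assumes "u \<in> carrier_vec (Suc m)" "u \<bullet>c u = 1"
  obtains B where "B \<in> carrier_mat (Suc m) m" "mat_adjoint B * B = 1\<^sub>m m" "mat_adjoint B *\<^sub>v u = 0\<^sub>v m"
    "\<And>z. z \<in> carrier_vec (Suc m) \<Longrightarrow> z = (z \<bullet>c u) \<cdot>\<^sub>v u + B *\<^sub>v (mat_adjoint B *\<^sub>v z)"
proof -
  obtain W where "unitary (Suc m) W" "col W 0 = u"
    using unit_vec_extends_to_unitary[OF assms] .
  then show thesis using that unitary_first_col_complement[of m W] by blast
qed

lemma unit_eigenvector_exists:
  fixes M :: "complex mat"
  assumes M: "M \<in> carrier_mat (Suc m) (Suc m)"
  obtains e u where "eigenvalue M e" "u \<in> carrier_vec (Suc m)" "u \<bullet>c u = 1" "M *\<^sub>v u = e \<cdot>\<^sub>v u"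
proof -
  obtain es where cp: "char_poly M = (\<Prod>a\<leftarrow>es. [:- a, 1:])" and "length es = Suc m"
    using char_poly_factorized[OF M] by blast
  then obtain e es' where "es = e # es'" by (cases es) auto
  then have ev: "eigenvalue M e" using eigenvalue_root_char_poly[OF M] cp by simp
  then obtain v where "eigenvector M v e" unfolding eigenvalue_def by blast
  then have v: "v \<in> carrier_vec (Suc m)" "v \<noteq> 0\<^sub>v (Suc m)" "M *\<^sub>v v = e \<cdot>\<^sub>v v"
    using M by (auto simp: eigenvector_def)
  have Mu: "M *\<^sub>v vec_normalize v = e \<cdot>\<^sub>v vec_normalize v"
    using v M by (auto simp: vec_normalize_def mult_mat_vec smult_smult_assoc mult.commute)
  show thesis using that[OF ev _ vec_normalize_unit[OF v(1,2)] Mu] v(1) by simp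
qed

lemma deflation_eigenvalue:
  fixes M B :: "complex mat"
  assumes M: "M \<in> carrier_mat n n" and herm: "hermitian M"
    and u: "u \<in> carrier_vec n" and Mu: "M *\<^sub>v u = e \<cdot>\<^sub>v u"
    and B: "B \<in> carrier_mat n m" and BB: "mat_adjoint B * B = 1\<^sub>m m"
    and Bu: "mat_adjoint B *\<^sub>v u = 0\<^sub>v m"
    and decomp: "\<And>z. z \<in> carrier_vec n \<Longrightarrow> z = (z \<bullet>c u) \<cdot>\<^sub>v u + B *\<^sub>v (mat_adjoint B *\<^sub>v z)"
    and ev: "eigenvalue (mat_adjoint B * M * B) l"
  shows "eigenvalue M l"
proof -
  obtain y where y: "y \<in> carrier_vec m" "y \<noteq> 0\<^sub>v m" "mat_adjoint B * M * B *\<^sub>v y = l \<cdot>\<^sub>v y"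
    using ev M B by (auto simp: eigenvalue_def eigenvector_def)
  define x where "x = B *\<^sub>v y"
  have x: "x \<in> carrier_vec n" using B y by (simp add: x_def)
  have Mx: "M *\<^sub>v x \<in> carrier_vec n" using M x by simp
  have "mat_adjoint B *\<^sub>v x = (mat_adjoint B * B) *\<^sub>v y"
    unfolding x_def by (rule assoc_mult_mat_vec[symmetric, OF mat_adjoint_carrier[OF B] B y(1)])
  then have "mat_adjoint B *\<^sub>v x = y" using BB y by simp
  then have "x \<noteq> 0\<^sub>v n" using y(2) B by auto
  have "u \<bullet>c x = 0"
    using cscalar_prod_mat_adjoint[OF B u y(1)] Bu y by (simp add: x_def cscalar_prod_eq_sum)
  then have "(M *\<^sub>v x) \<bullet>c u = 0"
    using hermitian_cscalar_prod[OF M herm x u] cscalar_prod_smult_right[OF x u, of e]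
      cscalar_prod_swap[of u x] x u Mu by simp
  have "M *\<^sub>v x = ((M *\<^sub>v x) \<bullet>c u) \<cdot>\<^sub>v u + B *\<^sub>v (mat_adjoint B *\<^sub>v (M *\<^sub>v x))"
    by (rule decomp[OF Mx])
  also have "((M *\<^sub>v x) \<bullet>c u) \<cdot>\<^sub>v u = 0\<^sub>v n"
    using \<open>(M *\<^sub>v x) \<bullet>c u = 0\<close> u by auto
  also have "mat_adjoint B *\<^sub>v (M *\<^sub>v x) = l \<cdot>\<^sub>v y"
    using assoc_mult_mat3_vec[OF mat_adjoint_carrier[OF B] M B y(1)] by (simp add: x_def y(3))
  finally have "M *\<^sub>v x = l \<cdot>\<^sub>v x" using B y(1) by (simp add: x_def mult_mat_vec)
  then show ?thesis
    using x \<open>x \<noteq> 0\<^sub>v n\<close> M unfolding eigenvalue_def eigenvector_def by auto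
qed

lemma vec_norm_sq_decomposition:
  fixes B :: "complex mat"
  assumes u: "u \<in> carrier_vec n" and B: "B \<in> carrier_mat n m" and x: "x \<in> carrier_vec n"
    and decomp: "x = (x \<bullet>c u) \<cdot>\<^sub>v u + B *\<^sub>v (mat_adjoint B *\<^sub>v x)"
  shows "vec_norm_sq x = (cmod (x \<bullet>c u))\<^sup>2 + vec_norm_sq (mat_adjoint B *\<^sub>v x)"
proof -
  define a y where "a = x \<bullet>c u" and "y = mat_adjoint B *\<^sub>v x"
  have y: "y \<in> carrier_vec m" using B x by (simp add: y_def)
  have "x \<bullet>c x = x \<bullet>c (a \<cdot>\<^sub>v u) + x \<bullet>c (B *\<^sub>v y)"
    using cscalar_prod_add_right[OF x _ mult_mat_vec_carrier[OF B y], of "a \<cdot>\<^sub>v u"] u decomp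
    by (simp add: a_def y_def)
  also have "x \<bullet>c (B *\<^sub>v y) = y \<bullet>c y"
    using cscalar_prod_mat_adjoint[OF B x y] by (simp add: y_def)
  finally have "x \<bullet>c x = a * cnj a + y \<bullet>c y"
    using cscalar_prod_smult_right[OF x u] by (simp add: a_def mult.commute)
  then have "complex_of_real (vec_norm_sq x) = complex_of_real ((cmod a)\<^sup>2 + vec_norm_sq y)"
    by (simp only: cscalar_prod_self of_real_add complex_norm_square)
  then show ?thesis by (simp only: of_real_eq_iff a_def y_def)
qed

lemma deflation_quadratic_form:
  fixes M B :: "complex mat"
  assumes M: "M \<in> carrier_mat n n" and herm: "hermitian M"
    and u: "u \<in> carrier_vec n" and Mu: "M *\<^sub>v u = e \<cdot>\<^sub>v u"
    and B: "B \<in> carrier_mat n m" and Bu: "mat_adjoint B *\<^sub>v u = 0\<^sub>v m"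
    and x: "x \<in> carrier_vec n" and decomp: "x = (x \<bullet>c u) \<cdot>\<^sub>v u + B *\<^sub>v (mat_adjoint B *\<^sub>v x)"
  shows "Re ((M *\<^sub>v x) \<bullet>c x) = Re e * (cmod (x \<bullet>c u))\<^sup>2
    + Re ((mat_adjoint B * M * B *\<^sub>v (mat_adjoint B *\<^sub>v x)) \<bullet>c (mat_adjoint B *\<^sub>v x))"
proof -
  define a y p where "a = x \<bullet>c u" and "y = mat_adjoint B *\<^sub>v x" and "p = B *\<^sub>v y"
  have y: "y \<in> carrier_vec m" using B x by (simp add: y_def)
  have p: "p \<in> carrier_vec n" and Mp: "M *\<^sub>v p \<in> carrier_vec n" using B M y by (simp_all add: p_def)
  have Mx: "M *\<^sub>v x \<in> carrier_vec n" using M x by simp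
  have x_eq: "x = a \<cdot>\<^sub>v u + p" using decomp by (simp add: a_def y_def p_def)
  have up: "u \<bullet>c p = 0"
    using cscalar_prod_mat_adjoint[OF B u y] Bu y by (simp add: p_def cscalar_prod_eq_sum)
  have "(M *\<^sub>v x) \<bullet>c (a \<cdot>\<^sub>v u) = cnj a * (cnj e * a)"
    using cscalar_prod_smult_right[OF Mx u] hermitian_cscalar_prod[OF M herm x u]
      cscalar_prod_smult_right[OF x u] Mu by (simp add: a_def)
  moreover have "(M *\<^sub>v x) \<bullet>c p = (M *\<^sub>v p) \<bullet>c p"
  proof -
    have "(M *\<^sub>v x) \<bullet>c p = (a \<cdot>\<^sub>v u) \<bullet>c (M *\<^sub>v p) + p \<bullet>c (M *\<^sub>v p)"
      using hermitian_cscalar_prod[OF M herm x p] cscalar_prod_add_left[OF Mp _ p, of "a \<cdot>\<^sub>v u"] u x_eq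
      by simp
    moreover have "u \<bullet>c (M *\<^sub>v p) = 0"
      using hermitian_cscalar_prod[OF M herm u p] cscalar_prod_smult_left[OF p u] Mu up by simp
    ultimately show ?thesis
      using cscalar_prod_smult_left[OF Mp u] hermitian_cscalar_prod[OF M herm p p] by simp
  qed
  moreover have "(M *\<^sub>v p) \<bullet>c p = (mat_adjoint B * M * B *\<^sub>v y) \<bullet>c y"
    using cscalar_prod_mat_adjoint[OF B Mp y] assoc_mult_mat3_vec[OF mat_adjoint_carrier[OF B] M B y]
    by (simp add: p_def)
  ultimately have "(M *\<^sub>v x) \<bullet>c x = cnj e * (a * cnj a) + (mat_adjoint B * M * B *\<^sub>v y) \<bullet>c y"
    using cscalar_prod_add_right[OF Mx _ p, of "a \<cdot>\<^sub>v u"] u x_eq by (simp add: mult_ac)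
  then show ?thesis by (simp add: complex_norm_square[symmetric] a_def y_def)
qed

lemma hermitian_quadratic_form_ge:
  fixes M :: "complex mat"
  assumes "M \<in> carrier_mat n n" and "hermitian M" and "\<And>e. eigenvalue M e \<Longrightarrow> c \<le> Re e"
    and "x \<in> carrier_vec n"
  shows "c * vec_norm_sq x \<le> Re ((M *\<^sub>v x) \<bullet>c x)"
  using assms
proof (induction n arbitrary: M x)
  case 0
  then show ?case by (simp add: vec_norm_sq_def cscalar_prod_eq_sum)
next
  case (Suc m)
  note M = Suc.prems(1) and herm = Suc.prems(2) and x = Suc.prems(4)
  obtain e u where e: "eigenvalue M e" and u: "u \<in> carrier_vec (Suc m)" "u \<bullet>c u = 1"
    and Mu: "M *\<^sub>v u = e \<cdot>\<^sub>v u"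
    using unit_eigenvector_exists[OF M] .
  txt \<open>The columns of \<open>B\<close> span the orthogonal complement of the eigenvector \<open>u\<close>, so the
    quadratic form of \<open>M\<close> splits into the eigenvalue part along \<open>u\<close> and the quadratic form
    of the compression \<open>B\<^sup>H M B\<close>, whose eigenvalues are eigenvalues of \<open>M\<close>.\<close>
  obtain B where B: "B \<in> carrier_mat (Suc m) m" "mat_adjoint B * B = 1\<^sub>m m" "mat_adjoint B *\<^sub>v u = 0\<^sub>v m"
    and decomp: "\<And>z. z \<in> carrier_vec (Suc m) \<Longrightarrow> z = (z \<bullet>c u) \<cdot>\<^sub>v u + B *\<^sub>v (mat_adjoint B *\<^sub>v z)"
    using unit_vec_orthonormal_complement[OF u] by blast
  define y where "y = mat_adjoint B *\<^sub>v x"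
  have "c * vec_norm_sq y \<le> Re ((mat_adjoint B * M * B *\<^sub>v y) \<bullet>c y)"
  proof (rule Suc.IH)
    show "mat_adjoint B * M * B \<in> carrier_mat m m"
      using mat_adjoint_carrier[OF B(1)] M B(1) by (meson mult_carrier_mat)
    show "hermitian (mat_adjoint B * M * B)" by (rule hermitian_adjoint_congruence[OF M herm B(1)])
    show "c \<le> Re l" if "eigenvalue (mat_adjoint B * M * B) l" for l
      using Suc.prems(3) deflation_eigenvalue[OF M herm u(1) Mu B decomp that] by blast
    show "y \<in> carrier_vec m" using B(1) x by (simp add: y_def)
  qed
  moreover have "c * (cmod (x \<bullet>c u))\<^sup>2 \<le> Re e * (cmod (x \<bullet>c u))\<^sup>2"
    using Suc.prems(3)[OF e] by (simp add: mult_right_mono)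
  ultimately show ?case
    using deflation_quadratic_form[OF M herm u(1) Mu B(1,3) x decomp[OF x]]
      vec_norm_sq_decomposition[OF u(1) B(1) x decomp[OF x]]
    by (simp add: y_def algebra_simps)
qed

section \<open>Singular values\<close>

definition sing_vals_spec :: "complex mat \<Rightarrow> real list \<Rightarrow> bool" where
  "sing_vals_spec A s \<longleftrightarrow> length s = dim_col A \<and> sorted_wrt (\<ge>) s \<and> (\<forall>x\<in>set s. x \<ge> 0) \<and>
      char_poly (mat_adjoint A * A) = (\<Prod>x\<leftarrow>s. [:- complex_of_real (x\<^sup>2), 1:])"

lemma proots_prod_linear_factors: "proots (\<Prod>a\<leftarrow>as. [:- a, 1:]) = mset (as :: 'a::idom list)"
proof (induction as)
  case (Cons a as)
  have "(\<Prod>b\<leftarrow>as. [:- b, 1:]) \<noteq> (0 :: 'a poly)" by auto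
  then show ?case using Cons.IH by (simp add: proots_mult del: mult_pCons_left)
qed simp

lemma eigenvalue_adjoint_mult_self:
  fixes A :: "complex mat"
  assumes A: "A \<in> carrier_mat k n" and ev: "eigenvalue (mat_adjoint A * A) e"
  shows "e = complex_of_real (Re e)" and "0 \<le> Re e"
proof -
  obtain v where v: "v \<in> carrier_vec n" "v \<noteq> 0\<^sub>v n" "(mat_adjoint A * A) *\<^sub>v v = e \<cdot>\<^sub>v v"
    using ev A by (auto simp: eigenvalue_def eigenvector_def)
  have "e * complex_of_real (vec_norm_sq v) = (mat_adjoint A *\<^sub>v (A *\<^sub>v v)) \<bullet>c v"
    using v A cscalar_prod_smult_left[OF v(1) v(1)]
    by (simp add: cscalar_prod_self assoc_mult_mat_vec[OF mat_adjoint_carrier[OF A] A v(1), symmetric])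
  also have "\<dots> = complex_of_real (vec_norm_sq (A *\<^sub>v v))"
    using cscalar_prod_mat_adjoint[OF A mult_mat_vec_carrier[OF A v(1)] v(1)] by (simp add: cscalar_prod_self)
  finally have "e = complex_of_real (vec_norm_sq (A *\<^sub>v v) / vec_norm_sq v)"
    using vec_norm_sq_pos[OF v(1,2)] by (simp add: field_simps)
  then show "e = complex_of_real (Re e)" and "0 \<le> Re e"
    using vec_norm_sq_nonneg[of "A *\<^sub>v v"] vec_norm_sq_nonneg[of v] by simp_all
qed

lemma sing_vals_spec_unique:
  assumes "sing_vals_spec A s" and "sing_vals_spec A t"
  shows "s = t"
proof -
  define sq where "sq x = complex_of_real (x\<^sup>2)" for x :: real
  have "mset (map sq s) = proots (char_poly (mat_adjoint A * A))"
    using assms(1) proots_prod_linear_factors[of "map sq s"]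
    by (simp add: sing_vals_spec_def sq_def comp_def)
  also have "\<dots> = mset (map sq t)"
    using assms(2) proots_prod_linear_factors[of "map sq t"]
    by (simp add: sing_vals_spec_def sq_def comp_def)
  finally have "image_mset (\<lambda>z. sqrt (Re z)) (mset (map sq s)) = image_mset (\<lambda>z. sqrt (Re z)) (mset (map sq t))"
    by simp
  moreover have "image_mset (\<lambda>z. sqrt (Re z)) (mset (map sq r)) = mset r" if "\<forall>x\<in>set r. x \<ge> 0" for r
    using that by (induction r) (simp_all add: sq_def)
  ultimately have "mset s = mset t" using assms by (simp add: sing_vals_spec_def)
  moreover have "sorted (rev s)" and "sorted (rev t)"
    using assms by (simp_all add: sing_vals_spec_def sorted_wrt_rev)
  ultimately have "rev s = rev t"
    by (metis mset_rev properties_for_sort)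
  then show ?thesis by simp
qed

lemma sing_vals_spec_exists:
  fixes A :: "complex mat"
  assumes A: "A \<in> carrier_mat k n"
  shows "\<exists>s. sing_vals_spec A s"
proof -
  have M: "mat_adjoint A * A \<in> carrier_mat n n" using A by (meson mat_adjoint_carrier mult_carrier_mat)
  obtain es where cp: "char_poly (mat_adjoint A * A) = (\<Prod>a\<leftarrow>es. [:- a, 1:])" and les: "length es = n"
    using char_poly_factorized[OF M] by blast
  have real: "e = complex_of_real (Re e)" "0 \<le> Re e" if "e \<in> set es" for e
  proof -
    have "eigenvalue (mat_adjoint A * A) e"
      using that eigenvalue_root_char_poly[OF M] by (simp add: cp poly_prod_list prod_list_zero_iff)
    then show "e = complex_of_real (Re e)" "0 \<le> Re e"
      using eigenvalue_adjoint_mult_self[OF A] by blast+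
  qed
  define s where "s = rev (sort (map (\<lambda>e. sqrt (Re e)) es))"
  have "(\<Prod>x\<leftarrow>s. [:- complex_of_real (x\<^sup>2), 1:]) = (\<Prod>a\<leftarrow>es. [:- a, 1:])"
  proof -
    have "(\<Prod>x\<leftarrow>s. [:- complex_of_real (x\<^sup>2), 1:]) = (\<Prod>e\<in>#mset es. [:- complex_of_real ((sqrt (Re e))\<^sup>2), 1:])"
      by (simp add: s_def prod_mset_prod_list[symmetric] mset_map multiset.map_comp comp_def)
    also have "\<dots> = (\<Prod>e\<in>#mset es. [:- e, 1:])"
    proof (intro arg_cong[where f = prod_mset] image_mset_cong)
      fix e assume "e \<in># mset es"
      then show "[:- complex_of_real ((sqrt (Re e))\<^sup>2), 1:] = [:- e, 1:]"
        using real[of e] by (metis real_sqrt_pow2 set_mset_mset)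
    qed
    finally show ?thesis by (simp add: prod_mset_prod_list[symmetric] mset_map)
  qed
  then have "sing_vals_spec A s"
    using A les real by (auto simp: sing_vals_spec_def s_def sorted_wrt_rev cp)
  then show ?thesis ..
qed

lemma sing_vals_spec_sing_vals: "A \<in> carrier_mat k n \<Longrightarrow> sing_vals_spec A (sing_vals A)"
  unfolding sing_vals_def sing_vals_spec_def[symmetric]
  by (rule theI', metis sing_vals_spec_exists sing_vals_spec_unique)

lemma sigma_min_sq_le_eigenvalue:
  fixes A :: "complex mat"
  assumes A: "A \<in> carrier_mat k n" and n: "0 < n" and ev: "eigenvalue (mat_adjoint A * A) e"
  shows "(sigma n A)\<^sup>2 \<le> Re e"
proof -
  define s where "s = sing_vals A"
  have len: "length s = n" and sorted: "sorted_wrt (\<ge>) s" and nonneg: "\<forall>x\<in>set s. x \<ge> 0"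
    and cp: "char_poly (mat_adjoint A * A) = (\<Prod>x\<leftarrow>s. [:- complex_of_real (x\<^sup>2), 1:])"
    using sing_vals_spec_sing_vals[OF A] A by (auto simp: sing_vals_spec_def s_def)
  have M: "mat_adjoint A * A \<in> carrier_mat n n" using A by (meson mat_adjoint_carrier mult_carrier_mat)
  obtain j where j: "j < n" and e: "e = complex_of_real ((s ! j)\<^sup>2)"
    using ev eigenvalue_root_char_poly[OF M] len
    by (auto simp: cp poly_prod_list prod_list_zero_iff in_set_conv_nth)
  have "s ! (n - 1) \<le> s ! j"
    using sorted_wrt_nth_less[OF sorted, of j "n - 1"] j len by (cases "j = n - 1") auto
  moreover have "0 \<le> s ! (n - 1)" using nonneg len n by simp
  ultimately show ?thesis by (simp add: sigma_def s_def e power_mono)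
qed

lemma sigma_min_sq_mult_vec_le:
  fixes A :: "complex mat"
  assumes A: "A \<in> carrier_mat k n" and n: "0 < n" and y: "y \<in> carrier_vec n"
  shows "(sigma n A)\<^sup>2 * vec_norm_sq y \<le> vec_norm_sq (A *\<^sub>v y)"
proof -
  have M: "mat_adjoint A * A \<in> carrier_mat n n" using A by (meson mat_adjoint_carrier mult_carrier_mat)
  have "(sigma n A)\<^sup>2 * vec_norm_sq y \<le> Re ((mat_adjoint A * A *\<^sub>v y) \<bullet>c y)"
    using hermitian_quadratic_form_ge[OF M hermitian_adjoint_mult_self[OF A] _ y]
      sigma_min_sq_le_eigenvalue[OF A n] by blast
  also have "(mat_adjoint A * A *\<^sub>v y) \<bullet>c y = (A *\<^sub>v y) \<bullet>c (A *\<^sub>v y)"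
    using assoc_mult_mat_vec[OF mat_adjoint_carrier[OF A] A y]
      cscalar_prod_mat_adjoint[OF A mult_mat_vec_carrier[OF A y] y] by simp
  finally show ?thesis by (simp add: cscalar_prod_self)
qed

section \<open>Frobenius norm\<close>

lemma vec_norm_sq_isometry:
  fixes U :: "complex mat"
  assumes U: "U \<in> carrier_mat p k" and UU: "mat_adjoint U * U = 1\<^sub>m k" and y: "y \<in> carrier_vec k"
  shows "vec_norm_sq (U *\<^sub>v y) = vec_norm_sq y"
proof -
  have "complex_of_real (vec_norm_sq (U *\<^sub>v y)) = (mat_adjoint U *\<^sub>v (U *\<^sub>v y)) \<bullet>c y"
    using cscalar_prod_mat_adjoint[OF U mult_mat_vec_carrier[OF U y] y] by (simp add: cscalar_prod_self)
  also have "mat_adjoint U *\<^sub>v (U *\<^sub>v y) = y"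
    using assoc_mult_mat_vec[OF mat_adjoint_carrier[OF U] U y] UU y by simp
  finally show ?thesis by (simp add: cscalar_prod_self)
qed

lemma fro_sq_eq_sum_cols: "Y \<in> carrier_mat p q \<Longrightarrow> fro_sq Y = (\<Sum>j<q. vec_norm_sq (col Y j))"
  unfolding fro_sq_def vec_norm_sq_def by (subst sum.swap) (auto intro!: sum.cong)

lemma fro_sq_adjoint: "Y \<in> carrier_mat p q \<Longrightarrow> fro_sq (mat_adjoint Y) = fro_sq Y"
  unfolding fro_sq_def by (subst sum.swap) (auto intro!: sum.cong)

lemma fro_sq_mult_columnwise:
  fixes A Y :: "complex mat"
  assumes A: "A \<in> carrier_mat p k" and Y: "Y \<in> carrier_mat k q"
  shows "fro_sq (A * Y) = (\<Sum>j<q. vec_norm_sq (A *\<^sub>v col Y j))"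
proof -
  have "fro_sq (A * Y) = (\<Sum>j<q. vec_norm_sq (col (A * Y) j))"
    by (rule fro_sq_eq_sum_cols[OF mult_carrier_mat[OF A Y]])
  also have "\<dots> = (\<Sum>j<q. vec_norm_sq (A *\<^sub>v col Y j))"
    using col_mult2[OF A Y] by (intro sum.cong refl) (metis lessThan_iff)
  finally show ?thesis .
qed

lemma fro_sq_isometry_mult:
  fixes U Y :: "complex mat"
  assumes U: "U \<in> carrier_mat p k" and UU: "mat_adjoint U * U = 1\<^sub>m k" and Y: "Y \<in> carrier_mat k q"
  shows "fro_sq (U * Y) = fro_sq Y"
  using fro_sq_mult_columnwise[OF U Y] fro_sq_eq_sum_cols[OF Y] vec_norm_sq_isometry[OF U UU] Y
  by simp

lemma sigma_min_sq_fro_sq_mult_le: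
  fixes A Y :: "complex mat"
  assumes A: "A \<in> carrier_mat k n" and n: "0 < n" and Y: "Y \<in> carrier_mat n q"
  shows "(sigma n A)\<^sup>2 * fro_sq Y \<le> fro_sq (A * Y)"
  unfolding fro_sq_mult_columnwise[OF A Y] fro_sq_eq_sum_cols[OF Y] sum_distrib_left
  using sigma_min_sq_mult_vec_le[OF A n] Y by (intro sum_mono) simp

lemma sigma_min_sq_fro_sq_mult_adjoint_le:
  fixes B Y :: "complex mat"
  assumes B: "B \<in> carrier_mat k n" and n: "0 < n" and Y: "Y \<in> carrier_mat q n"
  shows "(sigma n B)\<^sup>2 * fro_sq Y \<le> fro_sq (Y * mat_adjoint B)"
proof -
  have "fro_sq (Y * mat_adjoint B) = fro_sq (B * mat_adjoint Y)"
    using fro_sq_adjoint[of "Y * mat_adjoint B" q k] mat_adjoint_mult[OF Y mat_adjoint_carrier[OF B]] Y B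
    by simp
  then show ?thesis
    using sigma_min_sq_fro_sq_mult_le[OF B n mat_adjoint_carrier[OF Y]] fro_sq_adjoint[OF Y] by simp
qed

lemma fro_sq_isometry_sandwich:
  fixes U V D :: "complex mat"
  assumes U: "U \<in> carrier_mat p L" and UU: "mat_adjoint U * U = 1\<^sub>m L"
    and V: "V \<in> carrier_mat q L" and VV: "mat_adjoint V * V = 1\<^sub>m L" and D: "D \<in> carrier_mat L L"
  shows "fro_sq (U * D * mat_adjoint V) = fro_sq D"
proof -
  have DV: "D * mat_adjoint V \<in> carrier_mat L q" using D V by (meson mat_adjoint_carrier mult_carrier_mat)
  have "fro_sq (U * D * mat_adjoint V) = fro_sq (D * mat_adjoint V)"
    using fro_sq_isometry_mult[OF U UU DV] assoc_mult_mat[OF U D mat_adjoint_carrier[OF V]] by simp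
  also have "\<dots> = fro_sq (V * mat_adjoint D)"
    using fro_sq_adjoint[OF DV] mat_adjoint_mult[OF D mat_adjoint_carrier[OF V]] by simp
  also have "\<dots> = fro_sq D"
    using fro_sq_isometry_mult[OF V VV mat_adjoint_carrier[OF D]] fro_sq_adjoint[OF D] by simp
  finally show ?thesis .
qed

lemma fro_sq_compression_ge:
  fixes U V D X Y :: "complex mat"
  assumes U: "U \<in> carrier_mat p L" and UU: "mat_adjoint U * U = 1\<^sub>m L"
    and V: "V \<in> carrier_mat q L" and VV: "mat_adjoint V * V = 1\<^sub>m L" and D: "D \<in> carrier_mat L L"
    and X: "X \<in> carrier_mat p L" and Y: "Y \<in> carrier_mat q L" and L: "0 < L"
  shows "(sigma L (mat_adjoint X * U))\<^sup>2 * (sigma L (mat_adjoint Y * V))\<^sup>2 * fro_sq (U * D * mat_adjoint V)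
    \<le> fro_sq (mat_adjoint X * (U * D * mat_adjoint V) * Y)"
proof -
  define A B where "A = mat_adjoint X * U" and "B = mat_adjoint Y * V"
  have A: "A \<in> carrier_mat L L" and B: "B \<in> carrier_mat L L"
    using X U Y V by (auto simp: A_def B_def intro: mult_carrier_mat[OF mat_adjoint_carrier])
  have DB: "D * mat_adjoint B \<in> carrier_mat L L" using D B by (meson mat_adjoint_carrier mult_carrier_mat)
  have Xh: "mat_adjoint X \<in> carrier_mat L p" and Vh: "mat_adjoint V \<in> carrier_mat L q"
    using X V by simp_all
  have DVh: "D * mat_adjoint V \<in> carrier_mat L q" using D Vh by simp
  have "mat_adjoint X * (U * D * mat_adjoint V) * Y = A * (D * mat_adjoint V) * Y"
    using assoc_mult_mat[OF U D Vh] assoc_mult_mat[OF Xh U DVh] by (simp add: A_def)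
  also have "\<dots> = A * (D * (mat_adjoint V * Y))"
    using assoc_mult_mat[OF A DVh Y] assoc_mult_mat[OF D Vh Y] by simp
  also have "mat_adjoint V * Y = mat_adjoint B"
    using mat_adjoint_mult[OF mat_adjoint_carrier[OF Y] V] by (simp add: B_def)
  finally have prod: "mat_adjoint X * (U * D * mat_adjoint V) * Y = A * (D * mat_adjoint B)" .
  have "(sigma L A)\<^sup>2 * (sigma L B)\<^sup>2 * fro_sq D \<le> (sigma L A)\<^sup>2 * fro_sq (D * mat_adjoint B)"
    using sigma_min_sq_fro_sq_mult_adjoint_le[OF B L D] by (simp add: mult.assoc mult_left_mono)
  also have "\<dots> \<le> fro_sq (A * (D * mat_adjoint B))"
    by (rule sigma_min_sq_fro_sq_mult_le[OF A L DB])
  finally show ?thesis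
    unfolding fro_sq_isometry_sandwich[OF U UU V VV D] prod A_def B_def .
qed

lemma re_trace_adjoint_mult_self:
  fixes H :: "complex mat"
  assumes H: "H \<in> carrier_mat p q"
  shows "Re (mtrace (mat_adjoint H * H)) = fro_sq H"
proof -
  have "mtrace (mat_adjoint H * H) = (\<Sum>i<q. \<Sum>k<p. complex_of_real ((cmod (H $$ (k, i)))\<^sup>2))"
    unfolding mtrace_def complex_norm_square using H
    by (auto simp: scalar_prod_def atLeast0LessThan mult.commute intro!: sum.cong)
  also have "\<dots> = complex_of_real (fro_sq H)"
    unfolding fro_sq_def of_real_sum using H by (subst sum.swap) simp
  finally show ?thesis by simp
qed

lemma fro_sq_pos:
  assumes H: "H \<in> carrier_mat p q" and "H \<noteq> 0\<^sub>m p q"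
  shows "0 < fro_sq H"
proof -
  obtain i j where "i < p" "j < q" "H $$ (i, j) \<noteq> 0"
  proof (rule ccontr)
    assume "\<not> thesis"
    with that have "H = 0\<^sub>m p q" using H by (intro eq_matI) auto
    with assms(2) show False ..
  qed
  then have row: "0 < (\<Sum>j'<q. (cmod (H $$ (i, j')))\<^sup>2)"
    by (intro sum_pos2[where i = j]) auto
  have "0 < (\<Sum>i'<p. \<Sum>j'<q. (cmod (H $$ (i', j')))\<^sup>2)"
    by (rule sum_pos2[where i = i]) (use row \<open>i < p\<close> in \<open>auto intro: sum_nonneg\<close>)
  then show ?thesis using H by (simp add: fro_sq_def)
qed

lemma dominant_left_sv_carrier: "dominant_left_sv L Y Uh \<Longrightarrow> Uh \<in> carrier_mat (dim_row Y) L"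
  unfolding dominant_left_sv_def unitary_def first_cols_def by auto

lemma dominant_right_sv_carrier: "dominant_right_sv L Y Vh \<Longrightarrow> Vh \<in> carrier_mat (dim_col Y) L"
  unfolding dominant_right_sv_def unitary_def first_cols_def by auto

theorem lemma3:
  fixes Nr Nt L m k :: nat
    and h :: "nat \<Rightarrow> complex" and \<theta>r \<theta>t :: "nat \<Rightarrow> real"
    and H U V Uh Vh W F YS Qh :: "complex mat"
  assumes "0 < L" and "L \<le> Nr" and "L \<le> Nt"
    and "\<forall>l<L. - (pi/2) \<le> \<theta>r l \<and> \<theta>r l < pi/2 \<and> - (pi/2) \<le> \<theta>t l \<and> \<theta>t l < pi/2"
    and "H = channel Nr Nt L h \<theta>r \<theta>t"
    and "H \<noteq> 0\<^sub>m Nr Nt"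
    \<comment> \<open>compact SVD of H with the L dominant singular triplets\<close>
    and "U \<in> carrier_mat Nr L" and "V \<in> carrier_mat Nt L"
    and "mat_adjoint U * U = 1\<^sub>m L" and "mat_adjoint V * V = 1\<^sub>m L"
    and "H = U * mat L L (\<lambda>(i,j). if i = j then complex_of_real (sigma (i+1) H) else 0) * mat_adjoint V"
    \<comment> \<open>estimated subspaces from the two-stage procedure\<close>
    and "YS \<in> carrier_mat Nr m" and "L \<le> m" and "m \<le> Nt"
    and "dominant_left_sv L YS Uh"
    and "Qh \<in> carrier_mat k Nt" and "L \<le> k"
    and "dominant_right_sv L Qh Vh"
    and "W = Uh" and "F = Vh"
  shows "eta H W F \<ge> (sigma L (mat_adjoint Uh * U))\<^sup>2 * (sigma L (mat_adjoint Vh * V))\<^sup>2"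
proof -
  define D where "D = mat L L (\<lambda>(i, j). if i = j then complex_of_real (sigma (i + 1) H) else 0)"
  have D: "D \<in> carrier_mat L L" by (simp add: D_def)
  have H: "H = U * D * mat_adjoint V" using assms(11) by (simp add: D_def)
  have Hc: "H \<in> carrier_mat Nr Nt"
    unfolding H using assms(7,8) D by (meson mat_adjoint_carrier mult_carrier_mat)
  have Uh: "Uh \<in> carrier_mat Nr L" using dominant_left_sv_carrier[OF assms(15)] assms(12) by simp
  have Vh: "Vh \<in> carrier_mat Nt L" using dominant_right_sv_carrier[OF assms(18)] assms(16) by simp
  have "(sigma L (mat_adjoint Uh * U))\<^sup>2 * (sigma L (mat_adjoint Vh * V))\<^sup>2 * fro_sq H
      \<le> fro_sq (mat_adjoint W * H * F)"
    using fro_sq_compression_ge[OF assms(7,9,8,10) D Uh Vh assms(1)]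
    unfolding H[symmetric] assms(19,20) .
  moreover have "0 < fro_sq H" by (rule fro_sq_pos[OF Hc assms(6)])
  ultimately show ?thesis
    by (simp add: eta_def re_trace_adjoint_mult_self[OF Hc] pos_le_divide_eq)
qed

end
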